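(* The set $\mathbb{N}$ is not a minimal additive complement to any set $W \subseteq \mathbb{Z}$.
   Context: $\mathbb{N}$ denotes the set of nonnegative integers. For $X, Y \subseteq \mathbb{Z}$, $X + Y = \{x + y : x \in X, y \in Y\}$. A set $C \subseteq \mathbb{Z}$ is an additive complement to $W \subseteq \mathbb{Z}$ if $C + W = \mathbb{Z}$; it is a minimal additive complement to $W$ if moreover no proper subset of $C$ is an additive complement to $W$. *)

theory Defs
  imports Main
begin

definition sumset :: "int set \<Rightarrow> int set \<Rightarrow> int set" where
  "sumset X Y = {x + y | x y. x \<in> X \<and> y \<in> Y}"

definition additive_complement :: "int set \<Rightarrow> int set \<Rightarrow> bool" where
  "additive_complement C W \<longleftrightarrow> sumset C W = UNIV"

definition minimal_additive_complement :: "int set \<Rightarrow> int set \<Rightarrow> bool" where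
  "minimal_additive_complement C W \<longleftrightarrow>
     additive_complement C W \<and> (\<forall>C'. C' \<subset> C \<longrightarrow> \<not> additive_complement C' W)"

end

theory Submission
  imports Defs
begin

text \<open>If \<open>C + W = \<int>\<close>, then every translate \<open>C + t\<close> is again a complement of \<open>W\<close>.
  Since \<open>\<nat> + 1 = \<nat> - {0}\<close> is a proper subset of \<open>\<nat>\<close>, \<open>\<nat>\<close> is never minimal.\<close>

lemma additive_complement_translate:
  assumes "additive_complement C W"
  shows "additive_complement ((+) t ` C) W"
  unfolding additive_complement_def
proof (intro set_eqI iffI)
  fix z :: int
  have "z - t \<in> sumset C W"
    using assms by (simp add: additive_complement_def)
  then obtain c w where "z - t = c + w" "c \<in> C" "w \<in> W"
    unfolding sumset_def by blast
  then show "z \<in> sumset ((+) t ` C) W"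
    unfolding sumset_def by force
qed simp

lemma nat_shift_psubset: "(+) 1 ` int ` UNIV \<subset> int ` UNIV"
proof
  show "(+) 1 ` int ` UNIV \<subseteq> int ` UNIV"
    by (auto simp flip: of_nat_Suc)
  have "(0::int) \<notin> (+) 1 ` int ` UNIV"
    by auto
  then show "(+) 1 ` int ` UNIV \<noteq> int ` UNIV"
    by force
qed

theorem proposition2:
  fixes W :: "int set"
  shows "\<not> minimal_additive_complement (int ` UNIV) W"
  using additive_complement_translate[of "int ` UNIV" W 1] nat_shift_psubset
  unfolding minimal_additive_complement_def by blast

end
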